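(* Let $\mathbf L=(L,\vee,\wedge,0,1)$ be a complemented lattice with $0\ne1$ and $D$ a deductive system of $\mathbf L$. Then: (i) $D$ is an order filter of $\mathbf L$ (i.e. $a\in D$ and $a\le b$ imply $b\in D$); (ii) if $x\to y\subseteq D$ for all $x,y\in D$, then $D$ is a filter of $\mathbf L$.
   Context: For $a\in L$, $a^+:=\{x\in L\mid a\vee x=1,\ a\wedge x=0\}$ (the set of all complements of $a$), and $a\to b:=\{x\vee(a\wedge b)\mid x\in a^+\}$. A deductive system of $\mathbf L$ is a subset $D\subseteq L$ such that $1\in D$, and whenever $a\in D$, $b\in L$ and $a\to b\subseteq D$, then $b\in D$. A filter is a non-empty order filter closed under $\wedge$. *)

theory Defs
  imports Main
begin

text \<open>A complemented lattice is modelled as a bounded lattice type in which every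
element has at least one complement (assumed explicitly in the theorem).\<close>

definition compls :: "'a::bounded_lattice \<Rightarrow> 'a set" where
  "compls a = {x. sup a x = top \<and> inf a x = bot}"

definition impl :: "'a::bounded_lattice \<Rightarrow> 'a \<Rightarrow> 'a set" where
  "impl a b = {sup x (inf a b) | x. x \<in> compls a}"

definition deductive_system :: "'a::bounded_lattice set \<Rightarrow> bool" where
  "deductive_system D \<longleftrightarrow> top \<in> D \<and> (\<forall>a b. a \<in> D \<and> impl a b \<subseteq> D \<longrightarrow> b \<in> D)"

definition order_filter :: "'a::bounded_lattice set \<Rightarrow> bool" where
  "order_filter D \<longleftrightarrow> (\<forall>a b. a \<in> D \<and> a \<le> b \<longrightarrow> b \<in> D)"

definition lattice_filter :: "'a::bounded_lattice set \<Rightarrow> bool" where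
  "lattice_filter D \<longleftrightarrow> D \<noteq> {} \<and> order_filter D \<and> (\<forall>a b. a \<in> D \<and> b \<in> D \<longrightarrow> inf a b \<in> D)"

end

theory Submission
  imports Defs
begin

text \<open>For \<open>a \<le> b\<close> every element \<open>x \<squnion> (a \<sqinter> b) = x \<squnion> a\<close> of \<open>a \<rightarrow> b\<close> is \<open>1\<close>, so modus ponens
  from \<open>a\<close> yields \<open>b\<close>; and since \<open>a \<rightarrow> b\<close> only depends on \<open>a \<sqinter> b\<close>, closure of \<open>D\<close> under
  implication sets gives \<open>a \<rightarrow> (a \<sqinter> b) = a \<rightarrow> b \<subseteq> D\<close> and hence \<open>a \<sqinter> b \<in> D\<close>.\<close>

lemma impl_subset_top_if_le:
  assumes "a \<le> b"
  shows "impl a b \<subseteq> {top}"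
  using assms by (auto simp: impl_def compls_def inf_absorb1 sup_commute)

lemma impl_inf_right: "impl a (inf a b) = impl a b"
  by (simp add: impl_def inf_assoc[symmetric])

lemma deductive_system_top: "deductive_system D \<Longrightarrow> top \<in> D"
  by (simp add: deductive_system_def)

lemma deductive_systemD:
  "deductive_system D \<Longrightarrow> a \<in> D \<Longrightarrow> impl a b \<subseteq> D \<Longrightarrow> b \<in> D"
  by (auto simp: deductive_system_def)

lemma deductive_system_order_filter:
  assumes "deductive_system D"
  shows "order_filter D"
  unfolding order_filter_def
proof (intro allI impI)
  fix a b assume "a \<in> D \<and> a \<le> b"
  moreover have "impl a b \<subseteq> D"
    using impl_subset_top_if_le[of a b] deductive_system_top[OF assms] \<open>a \<in> D \<and> a \<le> b\<close>
    by blast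
  ultimately show "b \<in> D"
    using deductive_systemD[OF assms] by blast
qed

lemma deductive_system_lattice_filter:
  assumes D: "deductive_system D"
    and impl_closed: "\<forall>x\<in>D. \<forall>y\<in>D. impl x y \<subseteq> D"
  shows "lattice_filter D"
proof -
  have "inf a b \<in> D" if "a \<in> D" "b \<in> D" for a b
    using deductive_systemD[OF D, of a "inf a b"] impl_inf_right[of a b] impl_closed that
    by simp
  then show ?thesis
    unfolding lattice_filter_def
    using deductive_system_order_filter[OF D] deductive_system_top[OF D] by blast
qed

theorem lemma1:
  fixes D :: "'a::bounded_lattice set"
  assumes complemented: "\<forall>a::'a. compls a \<noteq> {}"
    and nontriv: "(bot::'a) \<noteq> top"
    and ds: "deductive_system D"
  shows "order_filter D \<and>
    ((\<forall>x\<in>D. \<forall>y\<in>D. impl x y \<subseteq> D) \<longrightarrow> lattice_filter D)"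
  using deductive_system_order_filter[OF ds] deductive_system_lattice_filter[OF ds] by blast

end
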